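(* Let $\Gamma\subseteq\mathbb{Z}^d$ be a finite set. For every $n\ge2$ and $x\in\bar\Gamma$, $$\rho_n(\Phi_\Gamma(x))=\mathbb{E}^x\Big[\sum_{j=0}^{\tau-1}g_n(S_j)\Big],\qquad g_n(y)=\sum_{e\in\mathbb{Z}^d,|e|=1}\frac1{2d}\sum_{i=1}^n\frac{e^{\otimes i}}{i!}\otimes\rho_{n-i}(\Phi_\Gamma(y+e)),$$ and $\rho_0(\Phi_\Gamma(x))=1$, $\rho_1(\Phi_\Gamma(x))=0$ for every $x\in\bar\Gamma$.
   Context: Let $(S_k)_{k\ge0}$ be the simple random walk on $\mathbb{Z}^d$ started at $S_0=x$ (under $\mathbb{E}^x$), with i.i.d. increments uniformly distributed on the $2d$ unit vectors of $\mathbb{Z}^d$. $\partial\Gamma=\{y\in\mathbb{Z}^d\setminus\Gamma: |y-w|=1\text{ for some }w\in\Gamma\}$, $\bar\Gamma=\Gamma\cup\partial\Gamma$, $\tau=\min\{k\ge0:S_k\notin\Gamma\}$. $T((\mathbb{R}^d))$ is the algebra of formal tensor series $\mathbf a=(a_0,a_1,\dots)$, $a_n\in(\mathbb{R}^d)^{\otimes n}$, with $(\mathbf a\otimes\mathbf b)_n=\sum_{k=0}^na_k\otimes b_{n-k}$ and $\rho_n(\mathbf a)=a_n$; $\exp(v)=\sum_{i\ge0}v^{\otimes i}/i!$ for $v\in\mathbb{R}^d$. $\Phi_\Gamma(x)=\mathbb{E}^x[\exp(S_1-S_0)\otimes\cdots\otimes\exp(S_\tau-S_{\tau-1})]$ (coordinatewise;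 equal to $(1,0,0,\dots)$ if $\tau=0$), the expected signature of the piecewise linear random walk path stopped at $\tau$. *)

theory Defs
  imports "HOL-Probability.Probability"
begin

text \<open>Points of Z^d are integer vectors indexed by a finite type 'd (d = CARD('d)).\<close>

definition unit_vecs :: "(int ^ 'd) set" where
  "unit_vecs = {e. (\<Sum>i\<in>UNIV. (e $ i)^2) = 1}"

definition bdry :: "(int ^ 'd) set \<Rightarrow> (int ^ 'd) set" where
  "bdry G = {y. y \<notin> G \<and> (\<exists>w\<in>G. y - w \<in> unit_vecs)}"

definition clos :: "(int ^ 'd) set \<Rightarrow> (int ^ 'd) set" where
  "clos G = G \<union> bdry G"

definition walk_measure :: "(int ^ 'd) stream measure" where
  "walk_measure = stream_space (measure_pmf (pmf_of_set unit_vecs))"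

definition walkpos :: "int ^ 'd \<Rightarrow> (int ^ 'd) stream \<Rightarrow> nat \<Rightarrow> int ^ 'd" where
  "walkpos x \<omega> k = x + sum_list (stake k \<omega>)"

text \<open>Exit time tau = min{k >= 0. S_k not in G}; None if the walk never exits (a null event for finite G).\<close>
definition exit_time :: "(int ^ 'd) set \<Rightarrow> int ^ 'd \<Rightarrow> (int ^ 'd) stream \<Rightarrow> nat option" where
  "exit_time G x \<omega> = (if \<exists>k. walkpos x \<omega> k \<notin> G
      then Some (LEAST k. walkpos x \<omega> k \<notin> G) else None)"

text \<open>An element of (R^d)^{\<otimes>n} is represented by its coordinates, a function on index
  words of length n (values on words of other lengths are irrelevant).  A formal tensor
  series a = (a_0, a_1, ...) is a map from the level n to the level-n tensor, so that
  rho_n(a) = a n.\<close>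

type_synonym 'd tensor = "'d list \<Rightarrow> real"
type_synonym 'd tseries = "nat \<Rightarrow> 'd tensor"

definition tunit :: "'d tseries" where
  "tunit n ws = (if n = 0 then 1 else 0)"

definition tmult :: "'d tseries \<Rightarrow> 'd tseries \<Rightarrow> 'd tseries" where
  "tmult a b n ws = (\<Sum>k\<le>n. a k (take k ws) * b (n - k) (drop k ws))"

definition texp :: "real ^ 'd \<Rightarrow> 'd tseries" where
  "texp v i ws = (\<Prod>w\<leftarrow>ws. v $ w) / fact i"

definition ivec :: "int ^ 'd \<Rightarrow> real ^ 'd" where
  "ivec v = (\<chi> i. real_of_int (v $ i))"

text \<open>Signature of the piecewise linear path with the given list of increments:
  exp(v_1) \<otimes> ... \<otimes> exp(v_k) (the unit for the empty list).\<close>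
definition sig :: "(int ^ 'd) list \<Rightarrow> 'd tseries" where
  "sig vs = foldr (\<lambda>v acc. tmult (texp (ivec v)) acc) vs tunit"

definition Phi :: "(int ^ 'd) set \<Rightarrow> int ^ 'd \<Rightarrow> 'd tseries" where
  "Phi G x n ws = (\<integral>\<omega>. (case exit_time G x \<omega> of
        Some t \<Rightarrow> sig (stake t \<omega>) n ws | None \<Rightarrow> 0) \<partial>walk_measure)"

definition gfun :: "(int ^ 'd) set \<Rightarrow> nat \<Rightarrow> int ^ 'd \<Rightarrow> 'd tensor" where
  "gfun G n y ws = (\<Sum>e\<in>unit_vecs. (1 / (2 * real CARD('d))) *
      (\<Sum>i=1..n. ((\<Prod>w\<leftarrow>take i ws. real_of_int (e $ w)) / fact i)
                  * Phi G (y + e) (n - i) (drop i ws)))"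

end

theory Submission
  imports Defs "HOL-Real_Asymp.Real_Asymp"
begin

text \<open>
  The proof is first-step analysis combined with uniqueness for the discrete Dirichlet problem.
  Conditioning on the first increment e (uniform over the 2d unit vectors) and using Chen's
  identity sig(e . path) = exp(e) (x) sig(path), one gets Phi(x) = mean_e [exp(e) (x) Phi(x + e)]
  for x in G, while Phi = 1 outside G.  Read level by level: Phi_0 - 1 and Phi_1 have the mean
  value property on G and vanish outside it (for Phi_1 because the steps have mean zero), and for
  n >= 1 both Phi_n and E[sum_{j<tau} g_n(S_j)] solve h = g_n + mean_e h(. + e) on G with zero
  values outside G.  By the maximum principle such solutions are unique, which gives all three
  claims (in fact at every starting point, not only on the closure of G).

  Integrability of all functionals involved comes from the geometric decay of the probability
  of staying in G, which makes every moment of the exit time finite.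
\<close>

definition unit_vec :: "'d \<Rightarrow> int \<Rightarrow> int ^ 'd" where
  "unit_vec i s = (\<chi> j. if j = i then s else 0)"

lemma unit_vecs_eq: "unit_vecs = (\<lambda>(i, s). unit_vec i s) ` (UNIV \<times> {-1, 1})"
proof (intro set_eqI iffI)
  fix e :: "int ^ 'd" assume "e \<in> unit_vecs"
  hence S: "(\<Sum>j\<in>UNIV. (e $ j)^2) = 1" by (simp add: unit_vecs_def)
  then obtain i where i: "e $ i \<noteq> 0" by (metis (mono_tags, lifting) sum.neutral zero_neq_one power_zero_numeral)
  have split: "(\<Sum>j\<in>UNIV. (e $ j)^2) = (e $ i)^2 + (\<Sum>j\<in>UNIV - {i}. (e $ j)^2)"
    by (simp add: sum.remove)
  have "(\<Sum>j\<in>UNIV - {i}. (e $ j)^2) \<ge> 0" by (intro sum_nonneg) auto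
  moreover have "(e $ i)^2 \<ge> 1" using i by (smt (verit) power2_less_eq_zero_iff zero_less_power2)
  ultimately have sq: "(e $ i)^2 = 1" and rest: "(\<Sum>j\<in>UNIV - {i}. (e $ j)^2) = 0"
    using S split by linarith+
  have "e $ j = 0" if "j \<noteq> i" for j
    using rest that by (subst (asm) sum_nonneg_eq_0_iff) auto
  moreover have "e $ i \<in> {-1, 1}" using sq by (auto simp: power2_eq_1_iff)
  ultimately show "e \<in> (\<lambda>(i, s). unit_vec i s) ` (UNIV \<times> {-1, 1})"
    by (intro image_eqI[of _ _ "(i, e $ i)"]) (auto simp: unit_vec_def vec_eq_iff)
next
  fix e :: "int ^ 'd" assume "e \<in> (\<lambda>(i, s). unit_vec i s) ` (UNIV \<times> {-1, 1})"
  then obtain i s where e: "e = unit_vec i s" and s: "s \<in> {-1, 1}" by auto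
  have "(\<Sum>j\<in>UNIV. (e $ j)^2) = (\<Sum>j\<in>UNIV. if j = i then s^2 else 0)"
    by (intro sum.cong) (auto simp: e unit_vec_def)
  thus "e \<in> unit_vecs" using s by (auto simp: unit_vecs_def)
qed

lemma card_unit_vecs: "card (unit_vecs :: (int ^ 'd) set) = 2 * CARD('d)"
proof -
  have "inj_on (\<lambda>(i, s). unit_vec i s :: int ^ 'd) (UNIV \<times> {-1, 1})"
    by (auto simp: inj_on_def unit_vec_def vec_eq_iff split: if_splits)
  thus ?thesis by (simp add: unit_vecs_eq card_image card_cartesian_product)
qed

lemma finite_unit_vecs: "finite (unit_vecs :: (int ^ 'd) set)"
  by (simp add: unit_vecs_eq)

lemma unit_vecs_not_empty: "(unit_vecs :: (int ^ 'd) set) \<noteq> {}"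
  using card_unit_vecs[where 'd = 'd] by auto

lemma unit_vec_in_unit_vecs: "unit_vec i 1 \<in> unit_vecs"
  by (force simp: unit_vecs_eq)

lemma unit_vecs_nonzero: "e \<in> unit_vecs \<Longrightarrow> e \<noteq> 0"
  by (auto simp: unit_vecs_eq unit_vec_def vec_eq_iff)

lemma abs_unit_vecs_nth: "e \<in> unit_vecs \<Longrightarrow> \<bar>e $ w\<bar> \<le> 1"
  by (auto simp: unit_vecs_eq unit_vec_def)

lemma uminus_unit_vecs: "uminus ` unit_vecs = (unit_vecs :: (int ^ 'd) set)"
proof -
  have "- e \<in> unit_vecs" if "e \<in> unit_vecs" for e :: "int ^ 'd"
    using that by (simp add: unit_vecs_def)
  thus ?thesis by (force intro: image_eqI[of _ _ "- _"])
qed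

definition step_mean :: "(int ^ 'd \<Rightarrow> real) \<Rightarrow> real" where
  "step_mean f = (\<Sum>e\<in>unit_vecs. f e) / (2 * CARD('d))"

lemma one_less_two_card [simp]: "1 < 2 * real CARD('d::finite)"
  using zero_less_card_finite[where 'a = 'd] by linarith

lemma one_le_two_card [simp]: "1 \<le> 2 * real CARD('d::finite)"
  using one_less_two_card[where 'd = 'd] by linarith

lemma step_mean_const [simp]: "step_mean (\<lambda>_. c) = c"
  by (simp add: step_mean_def card_unit_vecs)

lemma step_mean_add: "step_mean (\<lambda>e. f e + g e) = step_mean f + step_mean g"
  by (simp add: step_mean_def sum.distrib add_divide_distrib)

lemma step_mean_diff: "step_mean (\<lambda>e. f e - g e) = step_mean f - step_mean g"
  by (simp add: step_mean_def sum_subtractf diff_divide_distrib)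

lemma step_mean_mono: "(\<And>e. e \<in> unit_vecs \<Longrightarrow> f e \<le> g e) \<Longrightarrow> step_mean f \<le> step_mean g"
  by (simp add: step_mean_def divide_right_mono sum_mono)

lemma step_mean_cmult: "step_mean (\<lambda>e. c * f e) = c * step_mean f"
  by (simp add: step_mean_def sum_distrib_left)

text \<open>By symmetry of the step distribution, every coordinate of a step has mean zero.\<close>
lemma step_mean_nth: "step_mean (\<lambda>e. real_of_int (e $ w)) = 0"
proof -
  have "(\<Sum>e\<in>unit_vecs. real_of_int (e $ w)) = (\<Sum>e\<in>uminus ` unit_vecs. real_of_int (e $ w))"
    by (simp only: uminus_unit_vecs)
  also have "\<dots> = - (\<Sum>e\<in>unit_vecs. real_of_int (e $ w))"
    by (subst sum.reindex) (auto simp: inj_on_def sum_negf)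
  finally show ?thesis by (simp add: step_mean_def)
qed

text \<open>This drives both the maximum principle and
  the geometric decay of the survival probabilities.\<close>
lemma step_mean_deficit:
  fixes f :: "int ^ 'd \<Rightarrow> real"
  assumes le: "\<And>e. e \<in> unit_vecs \<Longrightarrow> f e \<le> M" and e0: "e0 \<in> unit_vecs"
  shows "step_mean f \<le> M - (M - f e0) / (2 * CARD('d))"
proof -
  have "(\<Sum>e\<in>unit_vecs. f e) = f e0 + (\<Sum>e\<in>unit_vecs - {e0}. f e)"
    using e0 finite_unit_vecs by (rule sum.remove[rotated])
  also have "(\<Sum>e\<in>unit_vecs - {e0}. f e) \<le> (\<Sum>e\<in>(unit_vecs :: (int ^ 'd) set) - {e0}. M)"
    using le by (intro sum_mono) auto
  also have "\<dots> = (2 * CARD('d) - 1) * M"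
    using e0 by (simp add: card_Diff_singleton card_unit_vecs of_nat_diff)
  finally have "(\<Sum>e\<in>unit_vecs. f e) \<le> M * (2 * CARD('d)) - (M - f e0)"
    by (simp add: algebra_simps)
  thus ?thesis by (simp add: step_mean_def field_simps)
qed

lemma line_leaves_finite:
  fixes G :: "(int ^ 'd) set"
  assumes "finite G" and "e \<noteq> 0"
  shows "\<exists>k\<le>card G. x + int k *s e \<notin> G"
proof (rule ccontr)
  assume "\<not> ?thesis"
  hence sub: "(\<lambda>k. x + int k *s e) ` {..card G} \<subseteq> G" by auto
  obtain i where i: "e $ i \<noteq> 0" using \<open>e \<noteq> 0\<close> by (auto simp: vec_eq_iff)
  have "inj_on (\<lambda>k. x + int k *s e) {..card G}"
    using i by (auto simp: inj_on_def vec_eq_iff)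
  hence "card ((\<lambda>k. x + int k *s e) ` {..card G}) = Suc (card G)" by (simp add: card_image)
  with card_mono[OF assms(1) sub] show False by simp
qed

section \<open>The walk measure and first-step analysis\<close>

lemma prob_space_walk: "prob_space (walk_measure :: (int ^ 'd) stream measure)"
  unfolding walk_measure_def
  by (rule prob_space.prob_space_stream_space[OF measure_pmf.prob_space_axioms])

lemma space_walk [simp]: "space (walk_measure :: (int ^ 'd) stream measure) = UNIV"
  by (simp add: walk_measure_def space_stream_space)

lemma sets_walk: "sets (walk_measure :: (int ^ 'd) stream measure) = sets (stream_space (count_space UNIV))"
  unfolding walk_measure_def by (rule sets_stream_space_cong) simp

lemma measurable_stake_walk:
  "(\<lambda>\<omega>. h (stake k \<omega>)) \<in> measurable (walk_measure :: (int ^ 'd) stream measure) (count_space UNIV)"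
  by (subst measurable_cong_sets[OF sets_walk refl]) measurable

lemma measurable_stake_walk_borel:
  "(\<lambda>\<omega>. h (stake k \<omega>)) \<in> borel_measurable (walk_measure :: (int ^ 'd) stream measure)"
  by (rule measurable_compose[OF measurable_stake_walk]) simp

lemma measurable_Cons_walk:
  "(\<lambda>\<omega>. e ## \<omega>) \<in> measurable (walk_measure :: (int ^ 'd) stream measure) walk_measure"
  unfolding walk_measure_def by measurable

lemma AE_walk_unit_steps: "AE \<omega> in (walk_measure :: (int ^ 'd) stream measure). \<forall>i. \<omega> !! i \<in> unit_vecs"
proof -
  have "AE \<omega> in stream_space (measure_pmf (pmf_of_set (unit_vecs :: (int ^ 'd) set))).
          stream_all (\<lambda>e. e \<in> unit_vecs) \<omega>"
    by (rule prob_space.AE_stream_all[OF measure_pmf.prob_space_axioms])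
       (auto simp: AE_measure_pmf_iff finite_unit_vecs unit_vecs_not_empty)
  thus ?thesis unfolding walk_measure_def stream_all_def .
qed

lemma nn_integral_first_step:
  assumes "f \<in> borel_measurable (walk_measure :: (int ^ 'd) stream measure)"
  shows "(\<integral>\<^sup>+\<omega>. f \<omega> \<partial>walk_measure)
           = (\<Sum>e\<in>unit_vecs. \<integral>\<^sup>+\<omega>. f (e ## \<omega>) \<partial>walk_measure) / (2 * CARD('d))"
  using assms unfolding walk_measure_def
  by (subst prob_space.nn_integral_stream_space[OF measure_pmf.prob_space_axioms])
     (simp_all add: nn_integral_pmf_of_set[OF unit_vecs_not_empty finite_unit_vecs] card_unit_vecs)

text \<open>Restarting after a fixed first step preserves integrability, since that step has positive
  probability.\<close>
lemma integrable_Cons: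
  fixes f :: "(int ^ 'd) stream \<Rightarrow> real"
  assumes f: "integrable walk_measure f" and e: "e \<in> unit_vecs"
  shows "integrable walk_measure (\<lambda>\<omega>. f (e ## \<omega>))"
proof -
  have fm: "f \<in> borel_measurable walk_measure" using f by auto
  let ?N = "\<lambda>\<omega>. ennreal (norm (f \<omega>))"
  have "(\<integral>\<^sup>+\<omega>. ?N (e ## \<omega>) \<partial>walk_measure) \<le> (\<Sum>e\<in>(unit_vecs :: (int ^ 'd) set). \<integral>\<^sup>+\<omega>. ?N (e ## \<omega>) \<partial>walk_measure)"
    using e finite_unit_vecs by (intro member_le_sum) auto
  also have "\<dots> = (\<integral>\<^sup>+\<omega>. ?N \<omega> \<partial>walk_measure) * (2 * CARD('d))"
  proof -
    have "(2 * of_nat CARD('d) :: ennreal) / (2 * of_nat CARD('d)) = 1"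
      by (intro ennreal_divide_self) (auto simp: ennreal_mult_less_top of_nat_less_top)
    thus ?thesis using fm by (simp add: nn_integral_first_step ennreal_divide_times)
  qed
  also have "\<dots> < \<infinity>"
    using f by (simp add: integrable_iff_bounded ennreal_mult_less_top of_nat_less_top)
  finally show ?thesis
    using measurable_compose[OF measurable_Cons_walk fm] by (simp add: integrable_iff_bounded)
qed

lemma integral_first_step_nonneg:
  fixes f :: "(int ^ 'd) stream \<Rightarrow> real"
  assumes f: "integrable walk_measure f" and nonneg: "\<And>\<omega>. 0 \<le> f \<omega>"
  shows "integral\<^sup>L walk_measure f = step_mean (\<lambda>e. \<integral>\<omega>. f (e ## \<omega>) \<partial>walk_measure)"
proof -
  have fin: "(\<integral>\<^sup>+\<omega>. f (e ## \<omega>) \<partial>walk_measure) = ennreal (\<integral>\<omega>. f (e ## \<omega>) \<partial>walk_measure)"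
    if "e \<in> unit_vecs" for e
    using integrable_Cons[OF f that] nonneg by (intro nn_integral_eq_integral) auto
  have "ennreal (integral\<^sup>L walk_measure f) = (\<integral>\<^sup>+\<omega>. f \<omega> \<partial>walk_measure)"
    using f nonneg by (intro nn_integral_eq_integral[symmetric]) auto
  also have "\<dots> = (\<Sum>e\<in>unit_vecs. ennreal (\<integral>\<omega>. f (e ## \<omega>) \<partial>walk_measure)) / (2 * CARD('d))"
    using f by (simp add: nn_integral_first_step fin)
  also have "\<dots> = ennreal (step_mean (\<lambda>e. \<integral>\<omega>. f (e ## \<omega>) \<partial>walk_measure))"
    using nonneg
    by (simp add: step_mean_def sum_nonneg divide_ennreal ennreal_of_nat_eq_real_of_nat)
  finally show ?thesis
    using nonneg by (subst (asm) ennreal_inj) (auto intro!: integral_nonneg_AE divide_nonneg_nonneg sum_nonneg simp: step_mean_def)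
qed

lemma integral_first_step:
  fixes f :: "(int ^ 'd) stream \<Rightarrow> real"
  assumes f: "integrable walk_measure f"
  shows "integral\<^sup>L walk_measure f = step_mean (\<lambda>e. \<integral>\<omega>. f (e ## \<omega>) \<partial>walk_measure)"
proof -
  let ?p = "\<lambda>\<omega>. max (f \<omega>) 0" and ?n = "\<lambda>\<omega>. max (- f \<omega>) 0"
  have ip: "integrable walk_measure ?p" and inn: "integrable walk_measure ?n" using f by auto
  have parts: "max t 0 - max (- t) 0 = t" for t :: real by (simp add: max_def)
  have "integral\<^sup>L walk_measure f = integral\<^sup>L walk_measure (\<lambda>\<omega>. ?p \<omega> - ?n \<omega>)"
    by (simp only: parts)
  also have "\<dots> = integral\<^sup>L walk_measure ?p - integral\<^sup>L walk_measure ?n"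
    by (rule Bochner_Integration.integral_diff[OF ip inn])
  also have "\<dots> = step_mean (\<lambda>e. (\<integral>\<omega>. ?p (e ## \<omega>) \<partial>walk_measure) - (\<integral>\<omega>. ?n (e ## \<omega>) \<partial>walk_measure))"
    by (simp add: step_mean_diff integral_first_step_nonneg[OF ip] integral_first_step_nonneg[OF inn])
  also have "\<dots> = step_mean (\<lambda>e. \<integral>\<omega>. f (e ## \<omega>) \<partial>walk_measure)"
    unfolding step_mean_def
  proof (intro arg_cong2[where f = "(/)"] sum.cong refl)
    fix e :: "int ^ 'd" assume "e \<in> unit_vecs"
    hence "(\<integral>\<omega>. ?p (e ## \<omega>) - ?n (e ## \<omega>) \<partial>walk_measure)
        = (\<integral>\<omega>. ?p (e ## \<omega>) \<partial>walk_measure) - (\<integral>\<omega>. ?n (e ## \<omega>) \<partial>walk_measure)"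
      by (intro Bochner_Integration.integral_diff integrable_Cons ip inn)
    thus "(\<integral>\<omega>. ?p (e ## \<omega>) \<partial>walk_measure) - (\<integral>\<omega>. ?n (e ## \<omega>) \<partial>walk_measure)
        = (\<integral>\<omega>. f (e ## \<omega>) \<partial>walk_measure)"
      by (simp only: parts)
  qed
  finally show ?thesis .
qed

lemma walkpos_0 [simp]: "walkpos x \<omega> 0 = x"
  by (simp add: walkpos_def)

lemma walkpos_Cons_Suc [simp]: "walkpos x (e ## \<omega>) (Suc j) = walkpos (x + e) \<omega> j"
  by (simp add: walkpos_def add.assoc)

lemma walkpos_eq_stake: "j \<le> k \<Longrightarrow> walkpos x \<omega> j = x + sum_list (take j (stake k \<omega>))"
  by (simp add: walkpos_def take_stake min_def)

lemma exit_time_eq_Some_iff: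
  "exit_time G x \<omega> = Some k \<longleftrightarrow> walkpos x \<omega> k \<notin> G \<and> (\<forall>j<k. walkpos x \<omega> j \<in> G)"
proof
  assume h: "exit_time G x \<omega> = Some k"
  hence ex: "\<exists>k. walkpos x \<omega> k \<notin> G" and k: "k = (LEAST k. walkpos x \<omega> k \<notin> G)"
    by (auto simp: exit_time_def split: if_splits)
  show "walkpos x \<omega> k \<notin> G \<and> (\<forall>j<k. walkpos x \<omega> j \<in> G)"
    using LeastI_ex[OF ex] not_less_Least k by blast
next
  assume h: "walkpos x \<omega> k \<notin> G \<and> (\<forall>j<k. walkpos x \<omega> j \<in> G)"
  hence "(LEAST k. walkpos x \<omega> k \<notin> G) = k"
    by (intro Least_equality) (auto simp: not_less[symmetric])
  thus "exit_time G x \<omega> = Some k" using h by (auto simp: exit_time_def)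
qed

lemma exit_time_eq_None_iff: "exit_time G x \<omega> = None \<longleftrightarrow> (\<forall>k. walkpos x \<omega> k \<in> G)"
  by (simp add: exit_time_def)

lemma exit_time_outside: "x \<notin> G \<Longrightarrow> exit_time G x \<omega> = Some 0"
  by (simp add: exit_time_eq_Some_iff)

lemma exit_time_Cons:
  assumes "x \<in> G"
  shows "exit_time G x (e ## \<omega>) = map_option Suc (exit_time G (x + e) \<omega>)"
proof (cases "exit_time G (x + e) \<omega>")
  case None
  hence "\<forall>k. walkpos x (e ## \<omega>) k \<in> G"
    using assms by (simp add: exit_time_eq_None_iff) (metis not0_implies_Suc walkpos_0 walkpos_Cons_Suc)
  hence "exit_time G x (e ## \<omega>) = None" unfolding exit_time_eq_None_iff .
  thus ?thesis using None by simp
next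
  case (Some k)
  hence "walkpos x (e ## \<omega>) (Suc k) \<notin> G \<and> (\<forall>j<Suc k. walkpos x (e ## \<omega>) j \<in> G)"
    using assms by (auto simp: exit_time_eq_Some_iff less_Suc_eq_0_disj)
  thus ?thesis using Some exit_time_eq_Some_iff[of G x "e ## \<omega>" "Suc k"] by simp
qed

text \<open>The exit time is measurable: each event \<open>{\<tau> = k}\<close> depends on the first \<open>k\<close> increments.\<close>
lemma measurable_exit_time:
  "exit_time G x \<in> measurable (walk_measure :: (int ^ 'd) stream measure) (count_space UNIV)"
proof (subst measurable_count_space_eq2_countable, intro conjI ballI)
  have Some: "exit_time G x -` {Some k} \<inter> space walk_measure \<in> sets (walk_measure :: (int ^ 'd) stream measure)" for k
  proof -
    let ?h = "\<lambda>l. x + sum_list l \<notin> G \<and> (\<forall>j<k. x + sum_list (take j l) \<in> G)"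
    have "Measurable.pred walk_measure (\<lambda>\<omega>. ?h (stake k \<omega>))"
      by (rule measurable_stake_walk)
    moreover have "?h (stake k \<omega>) = (exit_time G x \<omega> = Some k)" for \<omega>
      by (simp add: exit_time_eq_Some_iff walkpos_eq_stake[of _ k] take_stake min_def)
    ultimately have "Measurable.pred walk_measure (\<lambda>\<omega>. exit_time G x \<omega> = Some k)"
      by simp
    thus ?thesis by (simp add: pred_def vimage_def Int_def)
  qed
  fix a :: "nat option"
  show "exit_time G x -` {a} \<inter> space walk_measure \<in> sets (walk_measure :: (int ^ 'd) stream measure)"
  proof (cases a)
    case None
    have "exit_time G x -` {None} \<inter> space walk_measure
        = space walk_measure - (\<Union>k. exit_time G x -` {Some k} \<inter> space walk_measure)"
      by auto
    also have "\<dots> \<in> sets walk_measure"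
      using Some sets.top[of walk_measure] by (intro sets.Diff sets.countable_UN) auto
    finally show ?thesis using None by simp
  qed (use Some in simp)
qed simp

lemma measurable_case_exit_time:
  assumes "\<And>t. F t \<in> measurable walk_measure N" and "z \<in> space N"
  shows "(\<lambda>\<omega>. case exit_time G x \<omega> of Some t \<Rightarrow> F t \<omega> | None \<Rightarrow> z) \<in> measurable walk_measure N"
proof (rule measurable_compose_countable[OF _ measurable_exit_time])
  fix i :: "nat option"
  show "(\<lambda>\<omega>. case i of Some t \<Rightarrow> F t \<omega> | None \<Rightarrow> z) \<in> measurable walk_measure N"
    using assms by (cases i) auto
qed

section \<open>Survival probabilities and moments of the exit time\<close>

definition stay_set :: "(int ^ 'd) set \<Rightarrow> int ^ 'd \<Rightarrow> nat \<Rightarrow> (int ^ 'd) stream set" where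
  "stay_set G x m = {\<omega>. \<forall>k\<le>m. walkpos x \<omega> k \<in> G}"

definition stay_prob :: "(int ^ 'd) set \<Rightarrow> nat \<Rightarrow> int ^ 'd \<Rightarrow> real" where
  "stay_prob G m x = measure walk_measure (stay_set G x m)"

lemma sets_stay_set [measurable]: "stay_set G x m \<in> sets (walk_measure :: (int ^ 'd) stream measure)"
proof -
  let ?h = "\<lambda>l. \<forall>k\<le>m. x + sum_list (take k l) \<in> G"
  have "Measurable.pred walk_measure (\<lambda>\<omega>. ?h (stake m \<omega>))"
    by (rule measurable_stake_walk)
  moreover have "?h (stake m \<omega>) = (\<omega> \<in> stay_set G x m)" for \<omega>
    by (auto simp: stay_set_def walkpos_eq_stake[of _ m])
  ultimately have "Measurable.pred (walk_measure :: (int ^ 'd) stream measure) (\<lambda>\<omega>. \<omega> \<in> stay_set G x m)"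
    by simp
  thus ?thesis by (simp add: pred_def)
qed

lemma stay_prob_nonneg: "0 \<le> stay_prob G m x"
  by (simp add: stay_prob_def)

lemma stay_prob_le_1: "stay_prob G m (x :: int ^ 'd) \<le> 1"
  unfolding stay_prob_def by (rule prob_space.prob_le_1[OF prob_space_walk])

lemma stay_prob_outside: "x \<notin> G \<Longrightarrow> stay_prob G m x = 0"
proof -
  assume "x \<notin> G"
  hence "stay_set G x m = {}" by (force simp: stay_set_def)
  thus ?thesis by (simp add: stay_prob_def)
qed

lemma stay_prob_0: "x \<in> G \<Longrightarrow> stay_prob G 0 (x :: int ^ 'd) = 1"
  using prob_space.prob_space[OF prob_space_walk] by (simp add: stay_prob_def stay_set_def)

lemma stay_prob_antimono: "stay_prob G (m + j) (x :: int ^ 'd) \<le> stay_prob G m x"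
proof -
  interpret walk: prob_space "walk_measure :: (int ^ 'd) stream measure" by (rule prob_space_walk)
  show ?thesis unfolding stay_prob_def
    by (intro walk.finite_measure_mono sets_stay_set) (auto simp: stay_set_def)
qed

lemma stay_set_Cons:
  assumes "x \<in> G"
  shows "e ## \<omega> \<in> stay_set G x (Suc m) \<longleftrightarrow> \<omega> \<in> stay_set G (x + e) m"
  unfolding stay_set_def
proof safe
  fix k assume "\<forall>k\<le>Suc m. walkpos x (e ## \<omega>) k \<in> G" "k \<le> m"
  thus "walkpos (x + e) \<omega> k \<in> G" by (metis Suc_le_mono walkpos_Cons_Suc)
next
  fix k assume "\<forall>k\<le>m. walkpos (x + e) \<omega> k \<in> G" "k \<le> Suc m"
  thus "walkpos x (e ## \<omega>) k \<in> G" using assms by (cases k) auto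
qed

lemma stay_prob_Suc:
  assumes "x \<in> G"
  shows "stay_prob G (Suc m) x = step_mean (\<lambda>e. stay_prob G m (x + e))"
proof -
  interpret walk: prob_space "walk_measure :: (int ^ 'd) stream measure" by (rule prob_space_walk)
  have "stay_prob G (Suc m) x = (\<integral>\<omega>. indicator (stay_set G x (Suc m)) \<omega> \<partial>walk_measure)"
    by (simp add: stay_prob_def)
  also have "\<dots> = step_mean (\<lambda>e. \<integral>\<omega>. indicator (stay_set G x (Suc m)) (e ## \<omega>) \<partial>walk_measure)"
    by (rule integral_first_step, rule integrable_real_indicator[OF sets_stay_set])
       (simp add: walk.emeasure_eq_measure)
  also have "\<dots> = step_mean (\<lambda>e. \<integral>\<omega>. indicator (stay_set G (x + e) m) \<omega> \<partial>walk_measure)"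
    by (simp only: indicator_def stay_set_Cons[OF assms])
  also have "\<dots> = step_mean (\<lambda>e. stay_prob G m (x + e))"
    by (simp add: stay_prob_def)
  finally show ?thesis .
qed

lemma stay_prob_add_le:
  assumes C: "\<And>y. stay_prob G m y \<le> C" and "0 \<le> C"
  shows "stay_prob G (m + j) (x :: int ^ 'd) \<le> C * stay_prob G j x"
proof (induction j arbitrary: x)
  case 0 thus ?case
    using C[of x] by (cases "x \<in> G") (simp_all add: stay_prob_0 stay_prob_outside)
next
  case (Suc j)
  show ?case
  proof (cases "x \<in> G")
    case True
    have "step_mean (\<lambda>e. stay_prob G (m + j) (x + e)) \<le> step_mean (\<lambda>e. C * stay_prob G j (x + e))"
      using Suc.IH by (rule step_mean_mono)
    thus ?thesis using True by (simp add: stay_prob_Suc step_mean_cmult)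
  qed (simp add: stay_prob_outside)
qed

lemma stay_prob_line_exit:
  assumes e: "e \<in> unit_vecs" and "k \<le> j" and "x + int k *s e \<notin> G"
  shows "stay_prob G j (x :: int ^ 'd) \<le> 1 - (1 / real (2 * CARD('d))) ^ j"
  using assms(2,3)
proof (induction j arbitrary: x k)
  case 0 thus ?case by (simp add: stay_prob_outside)
next
  case (Suc j)
  have small: "(1 / real (2 * CARD('d))) ^ Suc j \<le> (1::real)"
    by (rule power_le_one) simp_all
  show ?case
  proof (cases "x \<in> G")
    case True
    then obtain k' where k: "k = Suc k'" using Suc.prems by (cases k) auto
    have "(x + e) + int k' *s e \<notin> G" using Suc.prems by (simp add: k algebra_simps)
    hence IH: "stay_prob G j (x + e) \<le> 1 - (1 / real (2 * CARD('d))) ^ j"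
      using Suc.IH[of k' "x + e"] Suc.prems by (simp add: k)
    have "stay_prob G (Suc j) x = step_mean (\<lambda>e'. stay_prob G j (x + e'))"
      using True by (rule stay_prob_Suc)
    also have "\<dots> \<le> 1 - (1 - stay_prob G j (x + e)) / (2 * CARD('d))"
      by (rule step_mean_deficit) (simp_all add: stay_prob_le_1 e)
    also have "\<dots> \<le> 1 - (1 / real (2 * CARD('d))) ^ j / (2 * CARD('d))"
      using IH by (simp add: divide_right_mono)
    also have "\<dots> = 1 - (1 / real (2 * CARD('d))) ^ Suc j" by simp
    finally show ?thesis .
  qed (use small in \<open>simp add: stay_prob_outside\<close>)
qed

text \<open>Geometric decay of the survival probabilities of a finite set: with \<open>L = |G| + 1\<close>, every
  block of \<open>L\<close> steps is survived with probability at most \<open>q = 1 - (2d)\<^sup>-\<^sup>L < 1\<close>.\<close>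
lemma stay_prob_geometric:
  fixes G :: "(int ^ 'd) set"
  assumes "finite G"
  defines "L \<equiv> Suc (card G)"
  defines "q \<equiv> 1 - (1 / real (2 * CARD('d))) ^ L"
  shows "stay_prob G m x \<le> q ^ (m div L)"
proof -
  have q0: "0 \<le> q"
    unfolding q_def by (simp add: power_le_one)
  have block: "stay_prob G L y \<le> q" for y
  proof -
    obtain k where "k \<le> card G" "y + int k *s unit_vec undefined 1 \<notin> G"
      using line_leaves_finite[OF assms(1) unit_vecs_nonzero[OF unit_vec_in_unit_vecs]] by blast
    thus ?thesis unfolding L_def q_def
      by (intro stay_prob_line_exit[OF unit_vec_in_unit_vecs, of k]) auto
  qed
  have blocks: "stay_prob G (i * L) y \<le> q ^ i" for i y
  proof (induction i arbitrary: y)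
    case 0 show ?case by (simp add: stay_prob_le_1)
  next
    case (Suc i)
    have "stay_prob G (L + i * L) y \<le> q * stay_prob G (i * L) y"
      using block q0 by (rule stay_prob_add_le)
    also have "\<dots> \<le> q * q ^ i" using Suc.IH q0 by (rule mult_left_mono)
    finally show ?case by (simp add: add.commute)
  qed
  have "stay_prob G (m div L * L + m mod L) x \<le> stay_prob G (m div L * L) x"
    by (rule stay_prob_antimono)
  also have "\<dots> \<le> q ^ (m div L)" by (rule blocks)
  finally show ?thesis by simp
qed

text \<open>Polynomially weighted geometric series converge (radius of convergence 1).\<close>
lemma summable_poly_geometric:
  assumes "0 \<le> \<rho>" "\<rho> < (1::real)"
  shows "summable (\<lambda>m. (real m + 2) ^ n * \<rho> ^ m)"
proof (rule summable_in_conv_radius)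
  have "(\<lambda>m. norm ((real m + 2) ^ n) / norm ((real (Suc m) + 2) ^ n)) \<longlonglongrightarrow> 1"
    by simp real_asymp
  hence "conv_radius (\<lambda>m. (real m + 2) ^ n) = 1"
    by (intro conv_radius_ratio_limit_nonzero) auto
  thus "ereal (norm \<rho>) < conv_radius (\<lambda>m. (real m + 2) ^ n)" using assms by simp
qed

text \<open>Consequently polynomially weighted sums of survival probabilities converge: with
  \<open>\<rho> = q\<^sup>1\<^sup>/\<^sup>L\<close>, the probability of surviving \<open>m\<close> steps is at most \<open>\<rho>\<^sup>m / q\<close>.\<close>
lemma summable_stay_prob_moment:
  fixes G :: "(int ^ 'd) set"
  assumes "finite G"
  shows "summable (\<lambda>m. (real m + 2) ^ n * stay_prob G m x)"
proof -
  define L where "L = Suc (card G)"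
  define q where "q = 1 - (1 / real (2 * CARD('d))) ^ L"
  have q: "0 < q" "q < 1"
  proof -
    have "(1 / real (2 * CARD('d))) ^ L \<le> 1 / real (2 * CARD('d))"
      using power_decreasing[of 1 L "1 / real (2 * CARD('d))"] by (simp add: L_def)
    moreover have "1 / real (2 * CARD('d)) < 1" by simp
    ultimately show "0 < q" unfolding q_def by linarith
    show "q < 1" by (simp add: q_def)
  qed
  define \<rho> where "\<rho> = root L q"
  have L: "0 < L" by (simp add: L_def)
  have \<rho>: "0 \<le> \<rho>" "\<rho> < 1" "\<rho> ^ L = q"
    using q L by (simp_all add: \<rho>_def)
  have decay: "stay_prob G m x \<le> \<rho> ^ m / q" for m
  proof -
    have "m = m div L * L + m mod L" by simp
    moreover have "m mod L < L" using L by simp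
    moreover have "L * (m div L + 1) = m div L * L + L" by (simp add: algebra_simps)
    ultimately have "m \<le> L * (m div L + 1)" by linarith
    hence "\<rho> ^ (L * (m div L + 1)) \<le> \<rho> ^ m" using \<rho> by (intro power_decreasing) auto
    hence "q ^ (m div L) * q \<le> \<rho> ^ m" by (simp add: power_mult \<rho>(3) power_add mult.commute)
    hence "q ^ (m div L) \<le> \<rho> ^ m / q" using q by (simp add: pos_le_divide_eq)
    moreover have "stay_prob G m x \<le> q ^ (m div L)"
      unfolding L_def q_def by (rule stay_prob_geometric[OF assms])
    ultimately show ?thesis by linarith
  qed
  show ?thesis
  proof (rule summable_comparison_test[OF _ summable_mult[OF summable_poly_geometric[OF \<rho>(1,2)]]])
    show "\<exists>N. \<forall>m\<ge>N. norm ((real m + 2) ^ n * stay_prob G m x) \<le> 1 / q * ((real m + 2) ^ n * \<rho> ^ m)"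
    proof (intro exI allI impI)
      fix m :: nat
      have "(real m + 2) ^ n * stay_prob G m x \<le> (real m + 2) ^ n * (\<rho> ^ m / q)"
        using decay by (intro mult_left_mono) auto
      thus "norm ((real m + 2) ^ n * stay_prob G m x) \<le> 1 / q * ((real m + 2) ^ n * \<rho> ^ m)"
        using stay_prob_nonneg[of G m x] by simp
    qed
  qed
qed

text \<open>All moments of the exit time from a finite set are finite, since
  \<open>(\<tau> + 1)\<^sup>n \<le> 1 + \<Sum>\<^sub>m (m + 2)\<^sup>n 1{\<tau> > m}\<close>.\<close>
lemma integrable_exit_time_power:
  fixes G :: "(int ^ 'd) set"
  assumes "finite G"
  shows "integrable walk_measure
           (\<lambda>\<omega>. case exit_time G x \<omega> of Some t \<Rightarrow> (real t + 1) ^ n | None \<Rightarrow> 0)"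
proof -
  interpret walk: prob_space "walk_measure :: (int ^ 'd) stream measure" by (rule prob_space_walk)
  let ?T = "\<lambda>\<omega>. case exit_time G x \<omega> of Some t \<Rightarrow> (real t + 1) ^ n | None \<Rightarrow> 0"
  let ?S = "\<lambda>\<omega>. \<Sum>m. ennreal ((real m + 2) ^ n) * indicator (stay_set G x m) \<omega>"
  have pointwise: "ennreal (?T \<omega>) \<le> 1 + ?S \<omega>" for \<omega>
  proof (cases "exit_time G x \<omega>")
    case (Some t)
    show ?thesis
    proof (cases t)
      case (Suc s)
      have "\<omega> \<in> stay_set G x s" using Some Suc by (auto simp: exit_time_eq_Some_iff stay_set_def)
      hence "ennreal (?T \<omega>) = ennreal ((real s + 2) ^ n) * indicator (stay_set G x s) \<omega>"
        using Some Suc by (simp add: add.commute)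
      also have "\<dots> = (\<Sum>m\<in>{s}. ennreal ((real m + 2) ^ n) * indicator (stay_set G x m) \<omega>)"
        by (simp only: sum.insert finite.emptyI empty_iff sum.empty add_0_right not_False_eq_True)
      also have "\<dots> \<le> ?S \<omega>" by (rule sum_le_suminf) (auto intro: summableI)
      finally show ?thesis by (simp add: add_increasing)
    qed (use Some in simp)
  qed simp
  have "(\<integral>\<^sup>+\<omega>. ennreal (?T \<omega>) \<partial>walk_measure) \<le> (\<integral>\<^sup>+\<omega>. 1 + ?S \<omega> \<partial>walk_measure)"
    by (rule nn_integral_mono) (rule pointwise)
  also have "\<dots> = 1 + (\<Sum>m. ennreal ((real m + 2) ^ n) * emeasure walk_measure (stay_set G x m))"
    using walk.emeasure_space_1
    by (simp add: nn_integral_add nn_integral_suminf nn_integral_cmult_indicator)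
  also have "(\<Sum>m. ennreal ((real m + 2) ^ n) * emeasure walk_measure (stay_set G x m))
      = (\<Sum>m. ennreal ((real m + 2) ^ n * stay_prob G m x))"
    by (simp add: walk.emeasure_eq_measure stay_prob_def ennreal_mult'')
  also have "\<dots> = ennreal (\<Sum>m. (real m + 2) ^ n * stay_prob G m x)"
    using summable_stay_prob_moment[OF assms] by (intro suminf_ennreal2) (simp_all add: stay_prob_nonneg)
  also have "1 + ennreal (\<Sum>m. (real m + 2) ^ n * stay_prob G m x) < \<infinity>" by simp
  finally have "(\<integral>\<^sup>+\<omega>. ennreal (?T \<omega>) \<partial>walk_measure) < \<infinity>" .
  moreover have "?T \<in> borel_measurable walk_measure" by (rule measurable_case_exit_time) auto
  moreover have "?T \<omega> \<ge> 0" for \<omega> by (simp split: option.split)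
  ultimately show ?thesis by (simp add: integrable_iff_bounded)
qed

lemma sig_Nil [simp]: "sig [] = tunit"
  by (simp add: sig_def)

lemma sig_Cons: "sig (v # vs) = tmult (texp (ivec v)) (sig vs)"
  by (simp add: sig_def)

lemma sig_level_0: "sig vs 0 ws = 1"
  by (induction vs arbitrary: ws) (auto simp: sig_Cons tmult_def texp_def tunit_def)

lemma ivec_nth: "ivec v $ i = real_of_int (v $ i)"
  by (simp add: ivec_def)

lemma abs_texp_unit_le_1:
  assumes "v \<in> unit_vecs"
  shows "\<bar>texp (ivec v) k ws\<bar> \<le> 1"
proof -
  have prod: "\<bar>\<Prod>w\<leftarrow>ws. ivec v $ w\<bar> \<le> 1"
  proof (induction ws)
    case (Cons w ws)
    have "\<bar>ivec v $ w\<bar> \<le> 1" using abs_unit_vecs_nth[OF assms, of w] by (simp add: ivec_nth)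
    thus ?case using Cons by (simp add: abs_mult mult_le_one)
  qed simp
  have "\<bar>texp (ivec v) k ws\<bar> = \<bar>\<Prod>w\<leftarrow>ws. ivec v $ w\<bar> / fact k"
    by (simp add: texp_def abs_div)
  also have "\<dots> \<le> 1" using prod fact_ge_1[of k, where 'a = real] by (simp add: divide_le_eq_1, linarith)
  finally show ?thesis .
qed

lemma abs_sig_le:
  "set vs \<subseteq> unit_vecs \<Longrightarrow> \<bar>sig vs n ws\<bar> \<le> (real (length vs) + 1) ^ n"
proof (induction vs arbitrary: n ws)
  case Nil thus ?case by (simp add: tunit_def)
next
  case (Cons v vs)
  let ?L = "real (length vs) + 1"
  have "\<bar>sig (v # vs) n ws\<bar> \<le> (\<Sum>k\<le>n. \<bar>texp (ivec v) k (take k ws) * sig vs (n - k) (drop k ws)\<bar>)"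
    by (simp add: sig_Cons tmult_def sum_abs)
  also have "\<dots> \<le> (\<Sum>k\<le>n. of_nat (n choose k) * 1 ^ k * ?L ^ (n - k))"
  proof (rule sum_mono)
    fix k assume "k \<in> {..n}"
    hence "1 \<le> real (n choose k)" by (simp add: Suc_leI zero_less_binomial)
    moreover have "\<bar>texp (ivec v) k (take k ws)\<bar> \<le> 1" using Cons.prems abs_texp_unit_le_1 by auto
    moreover have "\<bar>sig vs (n - k) (drop k ws)\<bar> \<le> ?L ^ (n - k)" using Cons by auto
    ultimately have "\<bar>texp (ivec v) k (take k ws)\<bar> * \<bar>sig vs (n - k) (drop k ws)\<bar> \<le> real (n choose k) * ?L ^ (n - k)"
      by (intro mult_mono) auto
    thus "\<bar>texp (ivec v) k (take k ws) * sig vs (n - k) (drop k ws)\<bar> \<le> of_nat (n choose k) * 1 ^ k * ?L ^ (n - k)"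
      by (simp add: abs_mult)
  qed
  also have "\<dots> = (1 + ?L) ^ n" by (rule binomial_ring[symmetric])
  finally show ?case by simp
qed

definition exit_sig :: "(int ^ 'd) set \<Rightarrow> int ^ 'd \<Rightarrow> nat \<Rightarrow> 'd list \<Rightarrow> (int ^ 'd) stream \<Rightarrow> real" where
  "exit_sig G x n ws \<omega> = (case exit_time G x \<omega> of Some t \<Rightarrow> sig (stake t \<omega>) n ws | None \<Rightarrow> 0)"

definition exit_sum :: "(int ^ 'd) set \<Rightarrow> (int ^ 'd \<Rightarrow> real) \<Rightarrow> int ^ 'd \<Rightarrow> (int ^ 'd) stream \<Rightarrow> real" where
  "exit_sum G g x \<omega> = (case exit_time G x \<omega> of Some t \<Rightarrow> (\<Sum>j<t. g (walkpos x \<omega> j)) | None \<Rightarrow> 0)"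

lemma Phi_eq_integral: "Phi G x n ws = integral\<^sup>L walk_measure (exit_sig G x n ws)"
  unfolding Phi_def exit_sig_def ..

text \<open>Both functionals are integrable: they are dominated by \<open>(\<tau> + 1)\<^sup>n\<close> and by a multiple of
  \<open>\<tau> + 1\<close>, respectively.\<close>
lemma integrable_exit_sig:
  fixes G :: "(int ^ 'd) set"
  assumes "finite G"
  shows "integrable walk_measure (exit_sig G x n ws)"
proof (rule Bochner_Integration.integrable_bound[OF integrable_exit_time_power[OF assms]])
  show "exit_sig G x n ws \<in> borel_measurable walk_measure"
    unfolding exit_sig_def by (intro measurable_case_exit_time measurable_stake_walk_borel) auto
  show "AE \<omega> in walk_measure. norm (exit_sig G x n ws \<omega>)
          \<le> norm (case exit_time G x \<omega> of Some t \<Rightarrow> (real t + 1) ^ n | None \<Rightarrow> 0)"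
    using AE_walk_unit_steps
  proof eventually_elim
    case (elim \<omega>)
    show ?case
    proof (cases "exit_time G x \<omega>")
      case (Some t)
      have "set (stake t \<omega>) \<subseteq> unit_vecs" using elim by (auto simp: in_set_conv_nth)
      with abs_sig_le[OF this, of n ws] show ?thesis using Some by (simp add: exit_sig_def)
    qed (simp add: exit_sig_def)
  qed
qed

lemma integrable_exit_sum:
  fixes G :: "(int ^ 'd) set"
  assumes "finite G"
  shows "integrable walk_measure (exit_sum G g x)"
proof -
  define C where "C = (\<Sum>y\<in>G. \<bar>g y\<bar>)"
  have C: "\<bar>g y\<bar> \<le> C" if "y \<in> G" for y
    unfolding C_def using that assms by (intro member_le_sum) auto
  have "0 \<le> C" unfolding C_def by (intro sum_nonneg) auto
  show ?thesis
  proof (rule Bochner_Integration.integrable_bound[OF integrable_mult_right[OF integrable_exit_time_power[OF assms, where x = x and n = 1], of C]])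
    show "exit_sum G g x \<in> borel_measurable walk_measure"
      unfolding exit_sum_def
    proof (intro measurable_case_exit_time)
      fix t
      have "(\<lambda>\<omega>. \<Sum>j<t. g (x + sum_list (take j (stake t \<omega>)))) \<in> borel_measurable walk_measure"
        by (rule measurable_stake_walk_borel)
      moreover have "(\<Sum>j<t. g (x + sum_list (take j (stake t \<omega>)))) = (\<Sum>j<t. g (walkpos x \<omega> j))" for \<omega>
        by (intro sum.cong refl) (simp add: walkpos_eq_stake[of _ t])
      ultimately show "(\<lambda>\<omega>. \<Sum>j<t. g (walkpos x \<omega> j)) \<in> borel_measurable walk_measure"
        by simp
    qed auto
    show "AE \<omega> in walk_measure. norm (exit_sum G g x \<omega>)
            \<le> norm (C * (case exit_time G x \<omega> of Some t \<Rightarrow> (real t + 1) ^ 1 | None \<Rightarrow> 0))"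
    proof (rule AE_I2)
      fix \<omega>
      show "norm (exit_sum G g x \<omega>) \<le> norm (C * (case exit_time G x \<omega> of Some t \<Rightarrow> (real t + 1) ^ 1 | None \<Rightarrow> 0))"
      proof (cases "exit_time G x \<omega>")
        case (Some t)
        hence "walkpos x \<omega> j \<in> G" if "j < t" for j using that by (simp add: exit_time_eq_Some_iff)
        hence "\<bar>\<Sum>j<t. g (walkpos x \<omega> j)\<bar> \<le> (\<Sum>j<t. C)"
          using C by (intro order_trans[OF sum_abs] sum_mono) auto
        also have "\<dots> \<le> C * (real t + 1)" using \<open>0 \<le> C\<close> by (simp add: algebra_simps)
        finally show ?thesis using Some \<open>0 \<le> C\<close> by (simp add: exit_sum_def abs_mult)
      qed (simp add: exit_sum_def)
    qed
  qed
qed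

lemma exit_sig_outside: "x \<notin> G \<Longrightarrow> exit_sig G x n ws \<omega> = tunit n ws"
  by (simp add: exit_sig_def exit_time_outside)

lemma Phi_outside:
  assumes "x \<notin> G"
  shows "Phi G (x :: int ^ 'd) n ws = tunit n ws"
proof -
  have "exit_sig G x n ws = (\<lambda>_. tunit n ws)" using assms by (simp add: fun_eq_iff exit_sig_outside)
  interpret walk: prob_space "walk_measure :: (int ^ 'd) stream measure" by (rule prob_space_walk)
  show ?thesis using walk.prob_space \<open>exit_sig G x n ws = (\<lambda>_. tunit n ws)\<close>
    by (simp add: Phi_eq_integral)
qed

text \<open>Chen's identity for the first step: the stopped signature from \<open>x \<in> G\<close> is the exponential of
  the first increment times the stopped signature of the walk restarted at \<open>x + e\<close>.\<close>
lemma exit_sig_Cons: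
  "x \<in> G \<Longrightarrow> exit_sig G x n ws (e ## \<omega>)
     = (\<Sum>k\<le>n. texp (ivec e) k (take k ws) * exit_sig G (x + e) (n - k) (drop k ws) \<omega>)"
  by (cases "exit_time G (x + e) \<omega>") (auto simp: exit_sig_def exit_time_Cons sig_Cons tmult_def)

lemma Phi_first_step:
  fixes G :: "(int ^ 'd) set"
  assumes "finite G" and "x \<in> G"
  shows "Phi G x n ws
           = step_mean (\<lambda>e. \<Sum>k\<le>n. texp (ivec e) k (take k ws) * Phi G (x + e) (n - k) (drop k ws))"
proof -
  have "Phi G x n ws = step_mean (\<lambda>e. \<integral>\<omega>. exit_sig G x n ws (e ## \<omega>) \<partial>walk_measure)"
    unfolding Phi_eq_integral by (rule integral_first_step[OF integrable_exit_sig[OF assms(1)]])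
  also have "\<dots> = step_mean (\<lambda>e. \<Sum>k\<le>n. texp (ivec e) k (take k ws) * Phi G (x + e) (n - k) (drop k ws))"
    using assms by (simp add: exit_sig_Cons Phi_eq_integral integrable_exit_sig)
  finally show ?thesis .
qed

lemma integral_exit_sum_outside:
  assumes "x \<notin> G"
  shows "integral\<^sup>L walk_measure (exit_sum G g (x :: int ^ 'd)) = 0"
proof -
  have "exit_sum G g x = (\<lambda>_. 0)" using assms by (simp add: fun_eq_iff exit_sum_def exit_time_outside)
  thus ?thesis by simp
qed

lemma exit_sum_Cons:
  "x \<in> G \<Longrightarrow> exit_sum G g x (e ## \<omega>) = g x * exit_sig G (x + e) 0 [] \<omega> + exit_sum G g (x + e) \<omega>"
  by (cases "exit_time G (x + e) \<omega>")
     (simp_all del: sum.lessThan_Suc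
        add: exit_sum_def exit_sig_def exit_time_Cons sig_level_0 sum.lessThan_Suc_shift)

lemma exit_sum_first_step:
  fixes G :: "(int ^ 'd) set"
  assumes "finite G" and "x \<in> G"
  shows "integral\<^sup>L walk_measure (exit_sum G g x)
           = step_mean (\<lambda>e. g x * Phi G (x + e) 0 [] + integral\<^sup>L walk_measure (exit_sum G g (x + e)))"
proof -
  have "integral\<^sup>L walk_measure (exit_sum G g x)
          = step_mean (\<lambda>e. \<integral>\<omega>. exit_sum G g x (e ## \<omega>) \<partial>walk_measure)"
    by (rule integral_first_step[OF integrable_exit_sum[OF assms(1)]])
  also have "\<dots> = step_mean (\<lambda>e. g x * Phi G (x + e) 0 [] + integral\<^sup>L walk_measure (exit_sum G g (x + e)))"
    using assms
    by (simp add: exit_sum_Cons Phi_eq_integral integrable_exit_sig integrable_exit_sum)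
  finally show ?thesis .
qed

section \<open>Uniqueness for the discrete Dirichlet problem\<close>

text \<open>At a positive maximum the mean value property forces the
  neighbour in a fixed direction to be a maximum as well, so the maximum propagates along a line,
  which must leave \<open>G\<close>.\<close>
lemma mean_value_nonpos:
  fixes G :: "(int ^ 'd) set" and h :: "int ^ 'd \<Rightarrow> real"
  assumes fin: "finite G" and out: "\<And>y. y \<notin> G \<Longrightarrow> h y = 0"
    and mean: "\<And>y. y \<in> G \<Longrightarrow> h y = step_mean (\<lambda>e. h (y + e))"
  shows "h x \<le> 0"
proof (rule ccontr)
  assume "\<not> h x \<le> 0"
  hence "x \<in> G" using out by force
  define M where "M = Max (h ` G)"
  have le_M_on_G: "h y \<le> M" if "y \<in> G" for y unfolding M_def using fin that by simp
  have M_pos: "M > 0" using le_M_on_G[OF \<open>x \<in> G\<close>] \<open>\<not> h x \<le> 0\<close> by simp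
  have le_M: "h y \<le> M" for y using le_M_on_G out M_pos by (cases "y \<in> G") force+
  have "M \<in> h ` G" unfolding M_def using fin \<open>x \<in> G\<close> by (intro Max_in) auto
  then obtain x0 where "h x0 = M" by blast
  define e :: "int ^ 'd" where "e = unit_vec undefined 1"
  have e: "e \<in> unit_vecs" by (simp add: e_def unit_vec_in_unit_vecs)
  have propagate: "h (y + e) = M" if "h y = M" for y
  proof -
    have "y \<in> G" using that out M_pos by force
    hence "M \<le> M - (M - h (y + e)) / (2 * CARD('d))"
      using that mean step_mean_deficit[of "\<lambda>e'. h (y + e')" M e] le_M e by simp
    thus ?thesis using le_M[of "y + e"] by (simp add: field_simps)
  qed
  have on_line: "h (x0 + int k *s e) = M" for k
  proof (induction k)
    case (Suc k)
    have "x0 + int (Suc k) *s e = (x0 + int k *s e) + e" by (simp add: algebra_simps)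
    thus ?case using propagate[OF Suc.IH] by metis
  qed (simp add: \<open>h x0 = M\<close>)
  obtain k where "x0 + int k *s e \<notin> G"
    using line_leaves_finite[OF fin unit_vecs_nonzero[OF e]] by blast
  thus False using on_line[of k] out M_pos by simp
qed

text \<open>Uniqueness: applying the maximum principle to \<open>h\<close> and \<open>-h\<close>.\<close>
lemma mean_value_zero:
  fixes G :: "(int ^ 'd) set" and h :: "int ^ 'd \<Rightarrow> real"
  assumes fin: "finite G" and out: "\<And>y. y \<notin> G \<Longrightarrow> h y = 0"
    and mean: "\<And>y. y \<in> G \<Longrightarrow> h y = step_mean (\<lambda>e. h (y + e))"
  shows "h x = 0"
proof -
  have "h x \<le> 0" using assms by (rule mean_value_nonpos)
  moreover have "- h x \<le> 0"
    using fin by (rule mean_value_nonpos[where h = "\<lambda>y. - h y"])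
       (simp_all add: out mean step_mean_cmult[of "-1", simplified])
  ultimately show ?thesis by simp
qed

text \<open>Level 0: \<open>\<Phi> - 1\<close> vanishes outside \<open>G\<close> and is mean-valued on \<open>G\<close>.\<close>
lemma Phi_level_0:
  fixes G :: "(int ^ 'd) set"
  assumes "finite G"
  shows "Phi G x 0 [] = 1"
proof -
  have "Phi G x 0 [] - 1 = 0"
  proof (rule mean_value_zero[OF assms, where h = "\<lambda>y. Phi G y 0 [] - 1"])
    fix y assume "y \<in> G"
    thus "Phi G y 0 [] - 1 = step_mean (\<lambda>e. Phi G (y + e) 0 [] - 1)"
      by (simp add: Phi_first_step[OF assms] texp_def step_mean_diff)
  qed (simp add: Phi_outside tunit_def)
  thus ?thesis by simp
qed

text \<open>Level 1: since the steps have mean zero, the first level is mean-valued and vanishes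
  outside \<open>G\<close>.\<close>
lemma Phi_level_1:
  fixes G :: "(int ^ 'd) set"
  assumes "finite G" and "length ws = 1"
  shows "Phi G x 1 ws = 0"
proof -
  obtain w where ws: "ws = [w]" using assms(2) by (cases ws) auto
  show ?thesis
  proof (rule mean_value_zero[OF assms(1), where h = "\<lambda>y. Phi G y 1 ws"])
    fix y assume "y \<in> G"
    hence "Phi G y 1 ws = step_mean (\<lambda>e. Phi G (y + e) 1 ws + real_of_int (e $ w))"
      by (simp add: Phi_first_step[OF assms(1)] texp_def ws Phi_level_0[OF assms(1)] ivec_nth)
    thus "Phi G y 1 ws = step_mean (\<lambda>e. Phi G (y + e) 1 ws)"
      by (simp add: step_mean_add step_mean_nth)
  qed (simp add: Phi_outside tunit_def)
qed

text \<open>The inhomogeneity \<open>g\<^sub>n\<close> is the one-step mean of the terms of Chen's identity involving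
  at least one factor from the first step.\<close>
lemma gfun_eq_step_mean:
  "gfun G n y ws
     = step_mean (\<lambda>e. \<Sum>i=1..n. texp (ivec e) i (take i ws) * Phi G (y + e) (n - i) (drop i ws))"
  by (simp add: gfun_def step_mean_def texp_def ivec_nth sum_divide_distrib)

text \<open>Higher levels: \<open>\<Phi>\<^sub>n\<close> and the expected additive functional of \<open>g\<^sub>n\<close> satisfy the same
  inhomogeneous mean value equation with zero boundary values, so they coincide.\<close>
lemma Phi_level_ge_1:
  fixes G :: "(int ^ 'd) set"
  assumes "finite G" and "1 \<le> n"
  shows "Phi G x n ws = integral\<^sup>L walk_measure (exit_sum G (\<lambda>y. gfun G n y ws) x)"
proof -
  let ?g = "\<lambda>y. gfun G n y ws"
  have "Phi G x n ws - integral\<^sup>L walk_measure (exit_sum G ?g x) = 0"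
  proof (rule mean_value_zero[OF assms(1), where h = "\<lambda>y. Phi G y n ws - integral\<^sup>L walk_measure (exit_sum G ?g y)"])
    fix y assume y: "y \<in> G"
    have split_0: "{..n} = insert 0 {1..n}" by auto
    have "Phi G y n ws = step_mean (\<lambda>e. Phi G (y + e) n ws) + ?g y"
      by (simp add: Phi_first_step[OF assms(1) y] split_0 texp_def step_mean_add gfun_eq_step_mean)
    moreover have "integral\<^sup>L walk_measure (exit_sum G ?g y)
                     = ?g y + step_mean (\<lambda>e. integral\<^sup>L walk_measure (exit_sum G ?g (y + e)))"
      by (simp add: exit_sum_first_step[OF assms(1) y] Phi_level_0[OF assms(1)] step_mean_add)
    ultimately show "Phi G y n ws - integral\<^sup>L walk_measure (exit_sum G ?g y)
        = step_mean (\<lambda>e. Phi G (y + e) n ws - integral\<^sup>L walk_measure (exit_sum G ?g (y + e)))"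
      by (simp add: step_mean_diff)
  qed (use assms(2) in \<open>simp add: Phi_outside tunit_def integral_exit_sum_outside\<close>)
  thus ?thesis by simp
qed

theorem mainTheorem18:
  fixes G :: "(int ^ 'd) set" and x :: "int ^ 'd"
  assumes "finite G" and "x \<in> clos G"
  shows "(\<forall>n ws. 2 \<le> n \<longrightarrow> length ws = n \<longrightarrow>
            Phi G x n ws =
              (\<integral>\<omega>. (case exit_time G x \<omega> of
                   Some t \<Rightarrow> (\<Sum>j<t. gfun G n (walkpos x \<omega> j) ws) | None \<Rightarrow> 0)
                 \<partial>walk_measure))
       \<and> Phi G x 0 [] = 1
       \<and> (\<forall>ws. length ws = 1 \<longrightarrow> Phi G x 1 ws = 0)"
proof (intro conjI allI impI)
  fix n :: nat and ws :: "'d list"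
  assume "2 \<le> n"
  hence "Phi G x n ws = integral\<^sup>L walk_measure (exit_sum G (\<lambda>y. gfun G n y ws) x)"
    by (intro Phi_level_ge_1[OF assms(1)]) simp
  thus "Phi G x n ws = (\<integral>\<omega>. (case exit_time G x \<omega> of
                   Some t \<Rightarrow> (\<Sum>j<t. gfun G n (walkpos x \<omega> j) ws) | None \<Rightarrow> 0) \<partial>walk_measure)"
    unfolding exit_sum_def .
next
  show "Phi G x 0 [] = 1" by (rule Phi_level_0[OF assms(1)])
next
  fix ws :: "'d list"
  assume "length ws = 1"
  thus "Phi G x 1 ws = 0" by (rule Phi_level_1[OF assms(1)])
qed

end
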